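(* Let $u:\mathbb{R}_{\ge 0}\to[0,1]$ be non-increasing with $u(0)=1$ and $\lim_{t\to\infty}u(t)=0$. Let there be $n$ algorithms with runtime CDFs $F_1,\dots,F_n$, expected utilities $U_i=\int_0^\infty u(t)\,dF_i(t)$, let $i^{opt}\in\arg\max_i U_i$ and $\Delta_i=U_{i^{opt}}-U_i$. For captimes $\kappa_1,\dots,\kappa_n>0$ let $LB_i=\int_0^{\kappa_i}u(t)\,dF_i(t)$, $UB_i=LB_i+u(\kappa_i)(1-F_i(\kappa_i))$, and $i^*\in\arg\max_i LB_i$. Let $\epsilon>0$. If $$u(\kappa_i)\big(1-F_i(\kappa_i)\big)\le\Delta_i+\frac{\epsilon}{2}\quad\text{for all algorithms } i,$$ then the skeptic is convinced that both $i^{opt}$ and $i^*$ are $\epsilon$-optimal, i.e., $LB_{i^{opt}}\ge UB_i-\epsilon$ for all $i\ne i^{opt}$ and $LB_{i^*}\ge UB_i-\epsilon$ for all $i\neq i^*$.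
   Context: An algorithm $j$ is $\epsilon$-optimal if $U_j\ge\max_i U_i-\epsilon$. In the prover–skeptic setting, the skeptic sees each CDF $F_i$ only on $[0,\kappa_i]$ and is "convinced that $j$ is $\epsilon$-optimal" exactly when $LB_j\ge UB_i-\epsilon$ for all $i\neq j$; this condition implies that $j$ is $\epsilon$-optimal. *)

theory Defs
  imports "HOL-Analysis.Analysis" "HOL-Probability.Probability"
begin

text \<open>Runtime distribution of an algorithm: a probability measure on the Borel reals
  supported on the nonnegative reals; its CDF is F(t) = measure M {..t}.\<close>

definition cdf_of :: "real measure \<Rightarrow> real \<Rightarrow> real" where
  "cdf_of M t = measure M {..t}"

definition exp_util :: "(real \<Rightarrow> real) \<Rightarrow> real measure \<Rightarrow> real" where
  "exp_util u M = (LINT t:{0..}|M. u t)"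

definition lower_bound :: "(real \<Rightarrow> real) \<Rightarrow> real measure \<Rightarrow> real \<Rightarrow> real" where
  "lower_bound u M \<kappa> = (LINT t:{0..\<kappa>}|M. u t)"

definition upper_bound :: "(real \<Rightarrow> real) \<Rightarrow> real measure \<Rightarrow> real \<Rightarrow> real" where
  "upper_bound u M \<kappa> = lower_bound u M \<kappa> + u \<kappa> * (1 - cdf_of M \<kappa>)"

text \<open>The skeptic (seeing each F_i only on [0,kappa_i]) is convinced that j is
  eps-optimal among the algorithms in I.\<close>
definition convinced_eps_optimal ::
  "(real \<Rightarrow> real) \<Rightarrow> 'i set \<Rightarrow> ('i \<Rightarrow> real measure) \<Rightarrow> ('i \<Rightarrow> real) \<Rightarrow> real \<Rightarrow> 'i \<Rightarrow> bool" where
  "convinced_eps_optimal u I M \<kappa> \<epsilon> j \<longleftrightarrow>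
     (\<forall>i\<in>I. i \<noteq> j \<longrightarrow> lower_bound u (M j) (\<kappa> j) \<ge> upper_bound u (M i) (\<kappa> i) - \<epsilon>)"

end

theory Submission
  imports Defs
begin

text \<open>Splitting the expected utility at the captime \<open>\<kappa>\<close> gives \<open>U = LB + T\<close>, where the
  tail \<open>T\<close> is the integral of \<open>u\<close> over runtimes beyond \<open>\<kappa>\<close>; as \<open>u\<close> is non-negative and
  non-increasing, \<open>0 \<le> T \<le> u \<kappa> (1 - F \<kappa>)\<close>, so \<open>LB \<le> U \<le> UB\<close>. The hypothesis then bounds
  every \<open>UB\<^sub>i\<close> by \<open>U\<^sub>o\<^sub>p\<^sub>t + \<epsilon>/2\<close> and, taken at the optimal algorithm itself, gives
  \<open>LB\<^sub>o\<^sub>p\<^sub>t \<ge> U\<^sub>o\<^sub>p\<^sub>t - \<epsilon>/2\<close>; finally \<open>LB\<^sub>* \<ge> LB\<^sub>o\<^sub>p\<^sub>t\<close>.\<close>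

lemma set_integrable_antimono_on_nonneg:
  fixes u :: "real \<Rightarrow> real"
  assumes u_mono: "antimono_on {0..} u" and u_nonneg: "\<And>t. t \<ge> 0 \<Longrightarrow> u t \<ge> 0"
    and N: "finite_measure N" "sets N = sets borel"
    and A: "A \<in> sets borel" "A \<subseteq> {0..}"
  shows "set_integrable N A u"
proof -
  define v where "v t = u (max 0 t)" for t
  have "mono (\<lambda>t. - v t)"
    using u_mono by (auto simp: v_def mono_def monotone_on_def)
  then have "(\<lambda>t. - (- v t)) \<in> borel_measurable borel"
    by (intro borel_measurable_uminus borel_measurable_mono)
  then have v_meas: "v \<in> borel_measurable N"
    unfolding measurable_cong_sets[OF N(2) refl] by simp
  have "v t \<in> {0..u 0}" for t
    using u_mono u_nonneg by (auto simp: v_def monotone_on_def)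
  then have "integrable N v"
    using N(1) v_meas by (intro finite_measure.integrable_const_bound[where B = "u 0"]) auto
  then have "set_integrable N A v"
    unfolding set_integrable_def using A N(2) by (intro integrable_mult_indicator) auto
  moreover have "v t = u t" if "t \<in> A" for t
    using A(2) that by (auto simp: v_def max_def)
  ultimately show ?thesis
    using set_integrable_cong[of N N A A v u] by simp
qed

lemma exp_util_eq_lower_bound_plus_tail:
  fixes u :: "real \<Rightarrow> real"
  assumes u_mono: "antimono_on {0..} u" and u_nonneg: "\<And>t. t \<ge> 0 \<Longrightarrow> u t \<ge> 0"
    and N: "finite_measure N" "sets N = sets borel" and k: "k \<ge> 0"
  shows "exp_util u N = lower_bound u N k + (LINT t:{k<..}|N. u t)"
proof -
  have "{0..} = {0..k} \<union> {k<..}"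
    using k by auto
  moreover have "set_integrable N {0..k} u" "set_integrable N {k<..} u"
    using k by (auto intro!: set_integrable_antimono_on_nonneg[OF u_mono u_nonneg N])
  moreover have "{0..k} \<inter> {k<..} = {}"
    by auto
  ultimately show ?thesis
    unfolding exp_util_def lower_bound_def by (simp add: set_integral_Un)
qed

lemma tail_utility_nonneg:
  fixes u :: "real \<Rightarrow> real"
  assumes u_nonneg: "\<And>t. t \<ge> 0 \<Longrightarrow> u t \<ge> 0" and k: "k \<ge> 0"
  shows "(LINT t:{k<..}|N. u t) \<ge> 0"
  unfolding set_lebesgue_integral_def using u_nonneg k
  by (intro Bochner_Integration.integral_nonneg) (auto simp: indicator_def)

lemma tail_utility_le:
  fixes u :: "real \<Rightarrow> real"
  assumes u_mono: "antimono_on {0..} u" and u_nonneg: "\<And>t. t \<ge> 0 \<Longrightarrow> u t \<ge> 0"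
    and N: "prob_space N" "sets N = sets borel" and k: "k \<ge> 0"
  shows "(LINT t:{k<..}|N. u t) \<le> u k * (1 - cdf_of N k)"
proof -
  interpret prob_space N by (rule N(1))
  have events: "{k<..} \<in> events" "{..k} \<in> events"
    using N(2) by auto
  have "(LINT t:{k<..}|N. u t) \<le> (LINT t:{k<..}|N. u k)"
  proof (rule set_integral_mono)
    show "set_integrable N {k<..} u"
      using k by (intro set_integrable_antimono_on_nonneg[OF u_mono u_nonneg finite_measure N(2)])
        auto
    show "set_integrable N {k<..} (\<lambda>_. u k)"
      unfolding set_integrable_def using events by (intro integrable_mult_indicator) auto
    show "u t \<le> u k" if "t \<in> {k<..}" for t
      using that k u_mono by (auto simp: monotone_on_def)
  qed
  also have "\<dots> = measure N {k<..} * u k"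
    using events by (simp add: set_integral_const)
  also have "measure N {k<..} = 1 - cdf_of N k"
  proof -
    have "space N - {..k} = {k<..}"
      using sets_eq_imp_space_eq[OF N(2)] by auto
    then show ?thesis
      using prob_compl[OF events(2)] by (simp add: cdf_of_def)
  qed
  finally show ?thesis
    by (simp add: mult.commute)
qed

lemma lower_bound_le_exp_util:
  fixes u :: "real \<Rightarrow> real"
  assumes "antimono_on {0..} u" "\<And>t. t \<ge> 0 \<Longrightarrow> u t \<ge> 0"
    and "finite_measure N" "sets N = sets borel" "k \<ge> 0"
  shows "lower_bound u N k \<le> exp_util u N"
  using exp_util_eq_lower_bound_plus_tail[OF assms]
    tail_utility_nonneg[where u = u and N = N, OF assms(2,5)]
  by linarith

lemma exp_util_le_upper_bound:
  fixes u :: "real \<Rightarrow> real"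
  assumes "antimono_on {0..} u" "\<And>t. t \<ge> 0 \<Longrightarrow> u t \<ge> 0"
    and "prob_space N" "sets N = sets borel" "k \<ge> 0"
  shows "exp_util u N \<le> upper_bound u N k"
  using exp_util_eq_lower_bound_plus_tail[OF assms(1,2) prob_space.finite_measure assms(4,5)]
    tail_utility_le[OF assms] assms(3)
  unfolding upper_bound_def by linarith

theorem lemma6:
  fixes u :: "real \<Rightarrow> real"
    and n :: nat
    and M :: "nat \<Rightarrow> real measure"
    and \<kappa> :: "nat \<Rightarrow> real"
    and iopt istar :: nat
    and \<epsilon> :: real
  assumes u_mono: "antimono_on {0..} u"
    and u_range: "\<And>t. t \<ge> 0 \<Longrightarrow> u t \<in> {0..1}"
    and u_zero: "u 0 = 1"
    and u_lim: "(u \<longlongrightarrow> 0) at_top"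
    and M_prob: "\<And>i. i < n \<Longrightarrow> prob_space (M i)"
    and M_borel: "\<And>i. i < n \<Longrightarrow> sets (M i) = sets borel"
    and M_nonneg: "\<And>i. i < n \<Longrightarrow> AE t in M i. t \<ge> 0"
    and iopt: "iopt < n" "\<And>i. i < n \<Longrightarrow> exp_util u (M i) \<le> exp_util u (M iopt)"
    and \<kappa>_pos: "\<And>i. i < n \<Longrightarrow> \<kappa> i > 0"
    and istar: "istar < n"
      "\<And>i. i < n \<Longrightarrow> lower_bound u (M i) (\<kappa> i) \<le> lower_bound u (M istar) (\<kappa> istar)"
    and \<epsilon>_pos: "\<epsilon> > 0"
    and hyp: "\<And>i. i < n \<Longrightarrow> u (\<kappa> i) * (1 - cdf_of (M i) (\<kappa> i))
                 \<le> (exp_util u (M iopt) - exp_util u (M i)) + \<epsilon> / 2"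
  shows "convinced_eps_optimal u {..<n} M \<kappa> \<epsilon> iopt
       \<and> convinced_eps_optimal u {..<n} M \<kappa> \<epsilon> istar"
proof -
  have u_nonneg: "\<And>t. t \<ge> 0 \<Longrightarrow> u t \<ge> 0"
    using u_range by auto
  have "lower_bound u (M iopt) (\<kappa> iopt) \<ge> exp_util u (M iopt) - \<epsilon> / 2"
    using exp_util_le_upper_bound[OF u_mono u_nonneg M_prob M_borel, of iopt "\<kappa> iopt"]
      hyp[of iopt] iopt(1) \<kappa>_pos[of iopt]
    unfolding upper_bound_def by linarith
  moreover have "upper_bound u (M i) (\<kappa> i) \<le> exp_util u (M iopt) + \<epsilon> / 2" if "i < n" for i
    using lower_bound_le_exp_util[OF u_mono u_nonneg prob_space.finite_measure[OF M_prob] M_borel,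
        of i "\<kappa> i"] hyp[of i] that \<kappa>_pos[OF that]
    unfolding upper_bound_def by linarith
  ultimately show ?thesis
    using istar(2)[OF iopt(1)] unfolding convinced_eps_optimal_def by fastforce
qed

end
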